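(* Let $\widetilde\xi$ be a two-parameter (Gaussian) white noise on $\mathbb{R}^2$ and define \[ \widetilde Z(x_1,x_2) = \frac12\int_{x_1}^{x_2}\int_{x_1}^{y_2}\widetilde\xi(dy_1,dy_2),\qquad (x_1,x_2)\in\mathbb{R}^2, \] interpreted as a two-parameter (Wiener) stochastic integral. Fix $\mathbf{x}=(x_1,x_2)\in\mathbb{R}^2$. Then for any $\kappa>0$, and for either choice of sign $\pm$, \[ \limsup_{\varepsilon\to 0}\frac{|\delta^{(1)}_{\pm\varepsilon}\delta^{(2)}_{\varepsilon}\widetilde Z(\mathbf{x})|}{|\varepsilon|^{1+\kappa}}=\infty \] almost surely.
   Context: A two-parameter white noise $\widetilde\xi$ on $\mathbb{R}^2$ is a family of centered Gaussian random variables $\{\widetilde\xi(\varphi):\varphi\in L^2(\mathbb{R}^2)\}$ with $\mathbb{E}[\widetilde\xi(\varphi_1)\widetilde\xi(\varphi_2)]=\langle\varphi_1,\varphi_2\rangle_{L^2(\mathbb{R}^2)}$; the integral $\int_A \widetilde\xi(dy_1,dy_2)$ means $\widetilde\xi(\mathbf 1_A)$. For $\varepsilon\in\mathbb{R}$ the difference operators are $\delta^{(1)}_\varepsilon f(x_1,x_2)=f(x_1+\varepsilon,x_2)-f(x_1,x_2)$ and $\delta^{(2)}_\varepsilon f(x_1,x_2)=f(x_1,x_2+\varepsilon)-f(x_1,x_2)$, so that $\delta^{(1)}_{\pm\varepsilon}\delta^{(2)}_\varepsilon f(\mathbf{x}) = f(x_1\pm\varepsilon,x_2+\varepsilon)-f(x_1\pm\varepsilon,x_2)-f(x_1,x_2+\varepsilon)+f(x_1,x_2)$.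 *)

theory Defs
  imports "HOL-Probability.Probability"
begin

definition sq_int :: "(real \<times> real \<Rightarrow> real) \<Rightarrow> bool" where
  "sq_int f \<longleftrightarrow> f \<in> borel_measurable borel \<and> integrable lborel (\<lambda>y. (f y)\<^sup>2)"

definition centered_gaussian :: "'a measure \<Rightarrow> ('a \<Rightarrow> real) \<Rightarrow> real \<Rightarrow> bool" where
  "centered_gaussian M X v \<longleftrightarrow> X \<in> borel_measurable M \<and>
     (if v = 0 then (AE \<omega> in M. X \<omega> = 0)
      else distributed M lborel X (normal_density 0 (sqrt v)))"

definition white_noise :: "'a measure \<Rightarrow> ((real \<times> real \<Rightarrow> real) \<Rightarrow> 'a \<Rightarrow> real) \<Rightarrow> bool" where
  "white_noise M W \<longleftrightarrow> prob_space M \<and>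
     (\<forall>f. sq_int f \<longrightarrow> centered_gaussian M (W f) (\<integral>y. (f y)\<^sup>2 \<partial>lborel)) \<and>
     (\<forall>f g. sq_int f \<longrightarrow> sq_int g \<longrightarrow>
        (\<integral>\<omega>. W f \<omega> * W g \<omega> \<partial>M) = (\<integral>y. f y * g y \<partial>lborel))"

text \<open>Oriented indicator: the integrand of \<open>\<integral>_a^b\<close> (negative orientation if b < a).\<close>
definition oind :: "real \<Rightarrow> real \<Rightarrow> real \<Rightarrow> real" where
  "oind a b t = (if a \<le> b then indicator {a..b} t else - indicator {b..a} t)"

text \<open>Kernel of \<open>\<integral>_{x1}^{x2} \<integral>_{x1}^{y2} \<xi>(dy1,dy2)\<close>.\<close>
definition zkernel :: "real \<times> real \<Rightarrow> real \<times> real \<Rightarrow> real" where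
  "zkernel x y = oind (fst x) (snd x) (snd y) * oind (fst x) (snd y) (fst y)"

text \<open>Rectangular increment \<open>\<delta>^(1)_{s\<epsilon>} \<delta>^(2)_\<epsilon> f(x)\<close>.\<close>
definition rect_incr :: "(real \<times> real \<Rightarrow> real) \<Rightarrow> real \<Rightarrow> real \<Rightarrow> real \<times> real \<Rightarrow> real" where
  "rect_incr f s e x = f (fst x + s * e, snd x + e) - f (fst x + s * e, snd x)
                       - f (fst x, snd x + e) + f x"

end

theory Submission
  imports Defs
begin

text \<open>
  For \<open>e > 0\<close> the rectangular increment of \<open>Z\<close> at \<open>x\<close> is almost surely \<open>W g / 2\<close>, where
  \<open>g\<close> is the same increment of the kernel \<open>z \<mapsto> zkernel z\<close>. When \<open>e\<close> is small compared with
  the distance of \<open>x\<close> to the diagonal, \<open>|g| \<ge> 1\<close> on a rectangle of area \<open>e\<^sup>2\<close>, so \<open>W g\<close> is a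
  centered Gaussian with standard deviation at least \<open>e\<close> and
  \<open>P(|W g| \<le> 2 N e\<^bsup>1+\<kappa>\<^esup>) \<le> 4 N e\<^bsup>\<kappa>\<^esup>\<close>. Along a sequence \<open>e\<^sub>n \<rightarrow> 0\<close> these probabilities
  vanish, so for every \<open>N\<close> almost surely the quotient exceeds \<open>N\<close> for infinitely many \<open>n\<close>.
\<close>

section \<open>Square-integrable functions\<close>

lemma integrable_mult_of_square_integrable:
  fixes u v :: "'a \<Rightarrow> real"
  assumes [measurable]: "u \<in> borel_measurable N" "v \<in> borel_measurable N"
    and "integrable N (\<lambda>x. (u x)\<^sup>2)" "integrable N (\<lambda>x. (v x)\<^sup>2)"
  shows "integrable N (\<lambda>x. u x * v x)"
proof (rule Bochner_Integration.integrable_bound)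
  show "integrable N (\<lambda>x. (u x)\<^sup>2 + (v x)\<^sup>2)"
    using assms by simp
  show "AE x in N. norm (u x * v x) \<le> norm ((u x)\<^sup>2 + (v x)\<^sup>2)"
  proof (intro AE_I2)
    fix x
    have "\<bar>u x * v x\<bar> \<le> 2 * \<bar>u x\<bar> * \<bar>v x\<bar>"
      by (simp add: abs_mult)
    also have "\<dots> \<le> \<bar>u x\<bar>\<^sup>2 + \<bar>v x\<bar>\<^sup>2"
      by (rule sum_squares_bound)
    finally show "norm (u x * v x) \<le> norm ((u x)\<^sup>2 + (v x)\<^sup>2)"
      by simp
  qed
qed measurable

lemma square_integrable_add_scaled:
  fixes u v :: "'a \<Rightarrow> real"
  assumes [measurable]: "u \<in> borel_measurable N" "v \<in> borel_measurable N"
    and "integrable N (\<lambda>x. (u x)\<^sup>2)" "integrable N (\<lambda>x. (v x)\<^sup>2)"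
  shows "integrable N (\<lambda>x. (u x + c * v x)\<^sup>2)"
proof -
  have "integrable N (\<lambda>x. (u x)\<^sup>2 + c\<^sup>2 * (v x)\<^sup>2 + 2 * c * (u x * v x))"
    using assms integrable_mult_of_square_integrable[of u N v] by simp
  then show ?thesis
    by (simp add: power2_eq_square algebra_simps)
qed

lemma integral_square_lincomb3:
  fixes u v w :: "'a \<Rightarrow> real"
  assumes [measurable]: "u \<in> borel_measurable N" "v \<in> borel_measurable N" "w \<in> borel_measurable N"
    and sq: "integrable N (\<lambda>x. (u x)\<^sup>2)" "integrable N (\<lambda>x. (v x)\<^sup>2)" "integrable N (\<lambda>x. (w x)\<^sup>2)"
  shows "(\<integral>x. (u x + a * v x + b * w x)\<^sup>2 \<partial>N) =
      (\<integral>x. u x * u x \<partial>N) + a\<^sup>2 * (\<integral>x. v x * v x \<partial>N) + b\<^sup>2 * (\<integral>x. w x * w x \<partial>N)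
      + 2 * a * (\<integral>x. u x * v x \<partial>N) + 2 * b * (\<integral>x. u x * w x \<partial>N) + 2 * a * b * (\<integral>x. v x * w x \<partial>N)"
proof -
  note I = integrable_mult_of_square_integrable[where N = N]
  have "(\<lambda>x. (u x + a * v x + b * w x)\<^sup>2) = (\<lambda>x. u x * u x + a\<^sup>2 * (v x * v x) + b\<^sup>2 * (w x * w x)
      + 2 * a * (u x * v x) + 2 * b * (u x * w x) + 2 * a * b * (v x * w x))"
    by (simp add: fun_eq_iff power2_eq_square algebra_simps)
  then show ?thesis
    using I[of u u] I[of v v] I[of w w] I[of u v] I[of u w] I[of v w] sq by simp
qed

section \<open>Small balls of centered Gaussians\<close>

lemma centered_gaussian_square_integrable:
  assumes X: "centered_gaussian M X v" and v: "0 \<le> v"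
  shows "integrable M (\<lambda>\<omega>. (X \<omega>)\<^sup>2)"
proof (cases "v = 0")
  case True
  with X have "AE \<omega> in M. 0 = (X \<omega>)\<^sup>2"
    unfolding centered_gaussian_def by (auto elim: AE_mp)
  with X show ?thesis
    unfolding centered_gaussian_def by (intro integrable_cong_AE_imp[OF integrable_zero]) auto
next
  case False
  with X have "distributed M lborel X (normal_density 0 (sqrt v))"
    unfolding centered_gaussian_def by simp
  moreover have "integrable lborel (\<lambda>x. normal_density 0 (sqrt v) x * x\<^sup>2)"
    using integrable_normal_moment[of "sqrt v" 0 2] v False by simp
  ultimately show ?thesis
    by (subst distributed_integrable[symmetric]) auto
qed

lemma normal_density_le_inverse:
  assumes "0 < \<sigma>"
  shows "normal_density \<mu> \<sigma> y \<le> 1 / \<sigma>"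
proof -
  have "normal_density \<mu> \<sigma> y \<le> 1 / sqrt (2 * pi * \<sigma>\<^sup>2)"
    unfolding normal_density_def by (intro mult_right_le_one_le) auto
  also have "\<dots> \<le> 1 / \<sigma>"
  proof (intro divide_left_mono)
    have "\<sigma> \<le> sqrt (2 * pi) * \<sigma>"
      using assms pi_gt3 by simp
    also have "\<dots> = sqrt (2 * pi * \<sigma>\<^sup>2)"
      using assms by (simp add: real_sqrt_mult)
    finally show "\<sigma> \<le> sqrt (2 * pi * \<sigma>\<^sup>2)" .
  qed (use assms in auto)
  finally show ?thesis .
qed

lemma centered_gaussian_small_ball:
  assumes X: "centered_gaussian M X v" and \<sigma>: "0 < \<sigma>" "\<sigma>\<^sup>2 \<le> v" and t: "0 \<le> t"
  shows "emeasure M {\<omega> \<in> space M. \<bar>X \<omega>\<bar> \<le> t} \<le> ennreal (2 * t / \<sigma>)"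
proof -
  have "0 < \<sigma>\<^sup>2"
    using \<sigma> by simp
  then have v: "0 < v" "\<sigma> \<le> sqrt v"
    using \<sigma> by (linarith, simp add: real_le_rsqrt)
  with X have [measurable]: "X \<in> borel_measurable M"
    and D: "distributed M lborel X (normal_density 0 (sqrt v))"
    by (auto simp: centered_gaussian_def)
  have "{\<omega> \<in> space M. \<bar>X \<omega>\<bar> \<le> t} = X -` {-t..t} \<inter> space M"
    by auto
  then have "emeasure M {\<omega> \<in> space M. \<bar>X \<omega>\<bar> \<le> t}
      = emeasure (density lborel (normal_density 0 (sqrt v))) {-t..t}"
    by (simp add: emeasure_distr distributed_distr_eq_density[OF D, symmetric])
  also have "\<dots> = (\<integral>\<^sup>+ y. ennreal (normal_density 0 (sqrt v) y) * indicator {-t..t} y \<partial>lborel)"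
    by (simp add: emeasure_density)
  also have "\<dots> \<le> (\<integral>\<^sup>+ y. ennreal (1 / \<sigma>) * indicator {-t..t} y \<partial>lborel)"
  proof (intro nn_integral_mono)
    fix y
    have "normal_density 0 (sqrt v) y \<le> 1 / sqrt v"
      using v by (intro normal_density_le_inverse) simp
    also have "\<dots> \<le> 1 / \<sigma>"
      using v \<sigma> by (intro divide_left_mono) auto
    finally show "ennreal (normal_density 0 (sqrt v) y) * indicator {-t..t} y
        \<le> ennreal (1 / \<sigma>) * indicator {-t..t} y"
      by (auto simp: indicator_def ennreal_leI)
  qed
  also have "\<dots> = ennreal (2 * t / \<sigma>)"
    using t \<sigma> by (simp add: nn_integral_cmult_indicator ennreal_mult[symmetric])
  finally show ?thesis .
qed

section \<open>Frequently large values and the limit superior\<close>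

lemma AE_frequently_gt_of_small_ball:
  assumes "prob_space M" and [measurable]: "\<And>n. X n \<in> borel_measurable M"
    and small: "\<And>N::nat. (\<lambda>n. measure M {\<omega> \<in> space M. \<bar>X n \<omega>\<bar> \<le> real N * r n}) \<longlonglongrightarrow> 0"
  shows "AE \<omega> in M. \<forall>N::nat. \<exists>\<^sub>F n in sequentially. real N * r n < \<bar>X n \<omega>\<bar>"
proof -
  interpret prob_space M
    by fact
  have "AE \<omega> in M. \<exists>n\<ge>m. real N * r n < \<bar>X n \<omega>\<bar>" for N m :: nat
  proof -
    define S where "S = {\<omega> \<in> space M. \<forall>n\<ge>m. \<bar>X n \<omega>\<bar> \<le> real N * r n}"
    have [measurable]: "S \<in> sets M"
      unfolding S_def by measurable
    have "measure M S \<le> measure M {\<omega> \<in> space M. \<bar>X n \<omega>\<bar> \<le> real N * r n}" if "m \<le> n" for n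
      using that by (intro finite_measure_mono) (auto simp: S_def)
    then have "measure M S \<le> 0"
      by (intro LIMSEQ_le_const[OF small]) auto
    then have "S \<in> null_sets M"
      by (simp add: null_sets_def emeasure_eq_measure measure_le_0_iff)
    from AE_not_in[OF this] show ?thesis
      by (rule AE_mp) (auto simp: S_def not_le intro!: AE_I2)
  qed
  then show ?thesis
    unfolding frequently_sequentially by (simp add: AE_all_countable)
qed

lemma positive_null_sequence_below:
  fixes c :: real
  assumes "0 < c"
  obtains e :: "nat \<Rightarrow> real" where "\<And>n. 0 < e n" "e \<longlonglongrightarrow> 0" "\<And>n. e n < c"
proof
  show "0 < c / real (Suc (Suc n))" for n
    using assms by simp
  show "(\<lambda>n. c / real (Suc (Suc n))) \<longlonglongrightarrow> 0"
    using LIMSEQ_Suc[OF LIMSEQ_Suc[OF lim_const_over_n[of c]]] .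
  show "c / real (Suc (Suc n)) < c" for n
    using assms by (simp add: divide_less_eq)
qed

lemma Limsup_eq_PInfty_of_frequently_ge:
  fixes f :: "'a \<Rightarrow> ereal"
  assumes e: "filterlim e F sequentially"
    and large: "\<And>N::nat. \<exists>\<^sub>F n in sequentially. ereal (real N) \<le> f (e n)"
  shows "Limsup F f = \<infinity>"
proof -
  have "\<infinity> \<le> Limsup F f"
  proof (rule Limsup_greatest)
    fix P
    assume "eventually P F"
    then have P: "eventually (\<lambda>n. P (e n)) sequentially"
      using e by (rule eventually_compose_filterlim)
    have "\<exists>y\<in>Collect P. ereal (real N) \<le> f y" for N :: nat
      using frequently_eventually_conj[OF large P] by (auto elim: frequentlyE)
    then show "\<infinity> \<le> (SUP y\<in>Collect P. f y)"
      by (simp add: SUP_PInfty)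
  qed
  then show ?thesis
    by simp
qed

section \<open>Linearity of white noise\<close>

lemma white_noise_prob_space: "white_noise M W \<Longrightarrow> prob_space M"
  by (simp add: white_noise_def)

lemma white_noise_centered_gaussian:
  "white_noise M W \<Longrightarrow> sq_int f \<Longrightarrow> centered_gaussian M (W f) (\<integral>y. (f y)\<^sup>2 \<partial>lborel)"
  by (simp add: white_noise_def)

lemma white_noise_measurable:
  assumes "white_noise M W" "sq_int f"
  shows "W f \<in> borel_measurable M"
  using white_noise_centered_gaussian[OF assms] by (simp add: centered_gaussian_def)

lemma white_noise_square_integrable:
  assumes "white_noise M W" "sq_int f"
  shows "integrable M (\<lambda>\<omega>. (W f \<omega>)\<^sup>2)"
  using white_noise_centered_gaussian[OF assms] by (rule centered_gaussian_square_integrable) simp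

lemma white_noise_cov:
  "white_noise M W \<Longrightarrow> sq_int f \<Longrightarrow> sq_int g \<Longrightarrow>
    (\<integral>\<omega>. W f \<omega> * W g \<omega> \<partial>M) = (\<integral>y. f y * g y \<partial>lborel)"
  by (simp add: white_noise_def)

lemma sq_int_add_scaled:
  "sq_int f \<Longrightarrow> sq_int g \<Longrightarrow> sq_int (\<lambda>y. f y + c * g y)"
  unfolding sq_int_def using square_integrable_add_scaled[of f lborel g c] by auto

lemma white_noise_integral_square_lincomb3:
  assumes wn: "white_noise M W" and f: "sq_int f" and g: "sq_int g" and h: "sq_int h"
  shows "(\<integral>\<omega>. (W f \<omega> + a * W g \<omega> + b * W h \<omega>)\<^sup>2 \<partial>M)
    = (\<integral>y. (f y + a * g y + b * h y)\<^sup>2 \<partial>lborel)"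
proof -
  have "(\<integral>\<omega>. (W f \<omega> + a * W g \<omega> + b * W h \<omega>)\<^sup>2 \<partial>M)
      = (\<integral>\<omega>. W f \<omega> * W f \<omega> \<partial>M) + a\<^sup>2 * (\<integral>\<omega>. W g \<omega> * W g \<omega> \<partial>M)
        + b\<^sup>2 * (\<integral>\<omega>. W h \<omega> * W h \<omega> \<partial>M) + 2 * a * (\<integral>\<omega>. W f \<omega> * W g \<omega> \<partial>M)
        + 2 * b * (\<integral>\<omega>. W f \<omega> * W h \<omega> \<partial>M) + 2 * a * b * (\<integral>\<omega>. W g \<omega> * W h \<omega> \<partial>M)"
    using f g h by (intro integral_square_lincomb3)
      (auto intro: white_noise_measurable[OF wn] white_noise_square_integrable[OF wn])
  also have "\<dots> = (\<integral>y. f y * f y \<partial>lborel) + a\<^sup>2 * (\<integral>y. g y * g y \<partial>lborel)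
        + b\<^sup>2 * (\<integral>y. h y * h y \<partial>lborel) + 2 * a * (\<integral>y. f y * g y \<partial>lborel)
        + 2 * b * (\<integral>y. f y * h y \<partial>lborel) + 2 * a * b * (\<integral>y. g y * h y \<partial>lborel)"
    using f g h by (simp only: white_noise_cov[OF wn])
  also have "\<dots> = (\<integral>y. (f y + a * g y + b * h y)\<^sup>2 \<partial>lborel)"
    using f g h unfolding sq_int_def by (intro integral_square_lincomb3[symmetric]) auto
  finally show ?thesis .
qed

lemma white_noise_add_scaled:
  assumes wn: "white_noise M W" and f: "sq_int f" and g: "sq_int g"
  shows "AE \<omega> in M. W (\<lambda>y. f y + c * g y) \<omega> = W f \<omega> + c * W g \<omega>"
proof -
  define h where "h = (\<lambda>y. f y + c * g y)"
  have h: "sq_int h"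
    unfolding h_def using f g by (rule sq_int_add_scaled)
  have [measurable]: "W k \<in> borel_measurable M" and sq: "integrable M (\<lambda>\<omega>. (W k \<omega>)\<^sup>2)"
    if "sq_int k" for k
    using wn that by (rule white_noise_measurable, rule white_noise_square_integrable)
  define D where "D \<omega> = W h \<omega> + (-1) * W f \<omega> + (-c) * W g \<omega>" for \<omega>
  have "(\<integral>\<omega>. (D \<omega>)\<^sup>2 \<partial>M) = (\<integral>y. (h y + (-1) * f y + (-c) * g y)\<^sup>2 \<partial>lborel)"
    unfolding D_def using wn h f g by (rule white_noise_integral_square_lincomb3)
  also have "\<dots> = 0"
    by (simp add: h_def)
  finally have "(\<integral>\<omega>. (D \<omega>)\<^sup>2 \<partial>M) = 0" .
  moreover have "integrable M (\<lambda>\<omega>. (D \<omega>)\<^sup>2)"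
    unfolding D_def using f g h
    by (intro square_integrable_add_scaled sq) (measurable; fail)+
  ultimately have "AE \<omega> in M. (D \<omega>)\<^sup>2 = 0"
    by (simp add: integral_nonneg_eq_0_iff_AE)
  then show ?thesis
  proof eventually_elim
    case (elim \<omega>)
    then have "W h \<omega> = W f \<omega> + c * W g \<omega>"
      by (simp add: D_def)
    then show ?case
      by (simp only: h_def)
  qed
qed

lemma sq_int_rect_incr:
  assumes k: "\<And>z. sq_int (k z)"
  shows "sq_int (\<lambda>y. rect_incr (\<lambda>z. k z y) s e x)"
proof -
  have "(\<lambda>y. rect_incr (\<lambda>z. k z y) s e x) = (\<lambda>y. k (fst x + s * e, snd x + e) y
      + (-1) * k (fst x + s * e, snd x) y + (-1) * k (fst x, snd x + e) y + 1 * k x y)"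
    by (simp add: rect_incr_def fun_eq_iff)
  then show ?thesis
    by (simp only:) (intro sq_int_add_scaled k)
qed

lemma white_noise_rect_incr:
  assumes wn: "white_noise M W" and k: "\<And>z. sq_int (k z)"
  shows "AE \<omega> in M. W (\<lambda>y. rect_incr (\<lambda>z. k z y) s e x) \<omega> = rect_incr (\<lambda>z. W (k z) \<omega>) s e x"
proof -
  define A B C where "A = k (fst x + s * e, snd x + e)" and "B = k (fst x + s * e, snd x)"
    and "C = k (fst x, snd x + e)"
  have A: "sq_int A" and B: "sq_int B" and C: "sq_int C"
    unfolding A_def B_def C_def by (rule k)+
  have AB: "sq_int (\<lambda>y. A y + (-1) * B y)"
    using A B by (rule sq_int_add_scaled)
  have ABC: "sq_int (\<lambda>y. A y + (-1) * B y + (-1) * C y)"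
    using AB C by (rule sq_int_add_scaled)
  have incr: "(\<lambda>y. rect_incr (\<lambda>z. k z y) s e x) = (\<lambda>y. A y + (-1) * B y + (-1) * C y + 1 * k x y)"
    by (simp add: rect_incr_def A_def B_def C_def fun_eq_iff)
  from white_noise_add_scaled[OF wn A B, of "-1"] white_noise_add_scaled[OF wn AB C, of "-1"]
    white_noise_add_scaled[OF wn ABC k, of 1 x]
  show ?thesis
    unfolding incr by eventually_elim (simp add: rect_incr_def A_def B_def C_def)
qed

lemma AE_rect_incr_eq:
  assumes "\<And>z. AE \<omega> in M. f z \<omega> = g z \<omega>"
  shows "AE \<omega> in M. rect_incr (\<lambda>z. f z \<omega>) s e x = rect_incr (\<lambda>z. g z \<omega>) s e x"
  using assms[of "(fst x + s * e, snd x + e)"] assms[of "(fst x + s * e, snd x)"]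
    assms[of "(fst x, snd x + e)"] assms[of x]
  by eventually_elim (simp add: rect_incr_def)

lemma AE_rect_incr_half_white_noise:
  assumes wn: "white_noise M W" and k: "\<And>z. sq_int (k z)"
    and Z: "\<And>z. AE \<omega> in M. Z z \<omega> = W (k z) \<omega> / 2"
  shows "AE \<omega> in M. rect_incr (\<lambda>z. Z z \<omega>) s e x = W (\<lambda>y. rect_incr (\<lambda>z. k z y) s e x) \<omega> / 2"
proof -
  have "AE \<omega> in M. rect_incr (\<lambda>z. Z z \<omega>) s e x = rect_incr (\<lambda>z. W (k z) \<omega> / 2) s e x"
    using Z by (rule AE_rect_incr_eq)
  with white_noise_rect_incr[of M W k s e x, OF wn k] show ?thesis
    by eventually_elim (simp add: rect_incr_def diff_divide_distrib add_divide_distrib)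
qed

section \<open>The kernel of \<open>Z\<close>\<close>

lemma oind_if:
  "oind a b t = (if a \<le> b then (if a \<le> t \<and> t \<le> b then 1 else 0)
                 else (if b \<le> t \<and> t \<le> a then -1 else 0))"
  by (simp add: oind_def indicator_def)

lemma borel_measurable_zkernel[measurable]: "zkernel z \<in> borel_measurable borel"
proof -
  have "zkernel z = (\<lambda>y. oind (fst z) (snd z) (snd y) * oind (fst z) (snd y) (fst y))"
    by (simp add: zkernel_def fun_eq_iff)
  then show ?thesis
    unfolding oind_if borel_prod[symmetric] by simp measurable
qed

lemma sq_int_zkernel: "sq_int (zkernel z)"
proof -
  define m M where "m = min (fst z) (snd z)" and "M = max (fst z) (snd z)"
  have "integrable lborel (indicator (cbox (m, m) (M, M)) :: real \<times> real \<Rightarrow> real)"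
    by (intro integrable_real_indicator emeasure_lborel_cbox_finite) simp
  then have "integrable lborel (\<lambda>y. (zkernel z y)\<^sup>2)"
  proof (rule Bochner_Integration.integrable_bound)
    show "AE y in lborel. norm ((zkernel z y)\<^sup>2) \<le> norm (indicator (cbox (m, m) (M, M)) y :: real)"
      unfolding m_def M_def zkernel_def oind_if
      by (intro AE_I2) (auto simp: cbox_Pair_eq indicator_def)
  qed measurable
  then show ?thesis
    by (simp add: sq_int_def)
qed

text \<open>Off the diagonal exactly one of the four kernels is nonzero on the rectangle; on the diagonal
  the nonzero ones have the same sign.\<close>

lemma abs_rect_incr_zkernel_ge_one:
  assumes e: "0 < e" "fst x \<noteq> snd x \<Longrightarrow> 2 * e < \<bar>fst x - snd x\<bar>" and s: "s = 1 \<or> s = -1"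
    and y: "y \<in> box (min (fst x) (fst x + s * e), snd x) (max (fst x) (fst x + s * e), snd x + e)"
  shows "1 \<le> \<bar>rect_incr (\<lambda>z. zkernel z y) s e x\<bar>"
proof -
  obtain a b y1 y2 where x: "x = (a, b)" and y': "y = (y1, y2)"
    by (cases x, cases y)
  from s consider "s = 1" | "s = -1"
    by blast
  then show ?thesis
    using e y unfolding x y' rect_incr_def zkernel_def oind_if
    by cases (auto simp: mem_box Basis_prod_def split: if_splits)
qed

lemma rect_incr_zkernel_square_integral_ge:
  assumes e: "0 < e" "fst x \<noteq> snd x \<Longrightarrow> 2 * e < \<bar>fst x - snd x\<bar>" and s: "s = 1 \<or> s = -1"
  shows "e\<^sup>2 \<le> (\<integral>y. (rect_incr (\<lambda>z. zkernel z y) s e x)\<^sup>2 \<partial>lborel)"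
proof -
  define R where "R = box (min (fst x) (fst x + s * e), snd x) (max (fst x) (fst x + s * e), snd x + e)"
  have "measure lborel R = e * e"
    using s e by (auto simp: R_def measure_lborel_box_eq Basis_prod_def)
  then have "e\<^sup>2 = (\<integral>y. indicator R y \<partial>lborel)"
    by (simp add: power2_eq_square)
  also have "\<dots> \<le> (\<integral>y. (rect_incr (\<lambda>z. zkernel z y) s e x)\<^sup>2 \<partial>lborel)"
  proof (rule integral_mono)
    show "integrable lborel (\<lambda>y. indicator R y :: real)"
      unfolding R_def by (intro integrable_real_indicator emeasure_lborel_box_finite) simp
    show "integrable lborel (\<lambda>y. (rect_incr (\<lambda>z. zkernel z y) s e x)\<^sup>2)"
      using sq_int_rect_incr[of zkernel, OF sq_int_zkernel] by (simp add: sq_int_def)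
    show "indicator R y \<le> (rect_incr (\<lambda>z. zkernel z y) s e x)\<^sup>2" for y
    proof (cases "y \<in> R")
      case True
      then have "1 \<le> \<bar>rect_incr (\<lambda>z. zkernel z y) s e x\<bar>"
        using abs_rect_incr_zkernel_ge_one[OF e s] by (simp add: R_def)
      then have "1 \<le> \<bar>rect_incr (\<lambda>z. zkernel z y) s e x\<bar>\<^sup>2"
        by (rule one_le_power)
      with True show ?thesis
        by simp
    qed simp
  qed
  finally show ?thesis .
qed

lemma white_noise_rect_incr_zkernel_small_ball:
  assumes wn: "white_noise M W"
    and e: "0 < e" "fst x \<noteq> snd x \<Longrightarrow> 2 * e < \<bar>fst x - snd x\<bar>" and s: "s = 1 \<or> s = -1"
    and t: "0 \<le> t"
  shows "measure M {\<omega> \<in> space M. \<bar>W (\<lambda>y. rect_incr (\<lambda>z. zkernel z y) s e x) \<omega>\<bar> \<le> t} \<le> 2 * t / e"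
proof -
  interpret prob_space M
    using wn by (rule white_noise_prob_space)
  have "emeasure M {\<omega> \<in> space M. \<bar>W (\<lambda>y. rect_incr (\<lambda>z. zkernel z y) s e x) \<omega>\<bar> \<le> t}
      \<le> ennreal (2 * t / e)"
    using white_noise_centered_gaussian[OF wn sq_int_rect_incr[of zkernel, OF sq_int_zkernel]] e(1)
      rect_incr_zkernel_square_integral_ge[OF e s] t
    by (rule centered_gaussian_small_ball)
  then show ?thesis
    using e t by (simp add: emeasure_eq_measure)
qed

lemma white_noise_rect_incr_zkernel_frequently_large:
  assumes wn: "white_noise M W"
    and e: "\<And>n. 0 < e n" "\<And>n. fst x \<noteq> snd x \<Longrightarrow> 2 * e n < \<bar>fst x - snd x\<bar>" "e \<longlonglongrightarrow> 0"
    and s: "s = 1 \<or> s = -1" and \<kappa>: "0 < \<kappa>"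
  shows "AE \<omega> in M. \<forall>N::nat. \<exists>\<^sub>F n in sequentially.
    real N * (2 * e n powr (1 + \<kappa>)) < \<bar>W (\<lambda>y. rect_incr (\<lambda>z. zkernel z y) s (e n) x) \<omega>\<bar>"
proof (rule AE_frequently_gt_of_small_ball)
  show "prob_space M"
    using wn by (rule white_noise_prob_space)
  show "W (\<lambda>y. rect_incr (\<lambda>z. zkernel z y) s (e n) x) \<in> borel_measurable M" for n
    using wn sq_int_rect_incr[of zkernel, OF sq_int_zkernel] by (rule white_noise_measurable)
  fix N :: nat
  have bound_lim: "(\<lambda>n. 4 * real N * e n powr \<kappa>) \<longlonglongrightarrow> 0"
    using e \<kappa> by (intro tendsto_mult_right_zero tendsto_zero_powrI)
      (auto intro!: always_eventually intro: less_imp_le)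
  have "measure M {\<omega> \<in> space M.
      \<bar>W (\<lambda>y. rect_incr (\<lambda>z. zkernel z y) s (e n) x) \<omega>\<bar> \<le> real N * (2 * e n powr (1 + \<kappa>))}
      \<le> 4 * real N * e n powr \<kappa>" for n
  proof -
    have "measure M {\<omega> \<in> space M.
      \<bar>W (\<lambda>y. rect_incr (\<lambda>z. zkernel z y) s (e n) x) \<omega>\<bar> \<le> real N * (2 * e n powr (1 + \<kappa>))}
        \<le> 2 * (real N * (2 * e n powr (1 + \<kappa>))) / e n"
      using e s by (intro white_noise_rect_incr_zkernel_small_ball[OF wn]) auto
    also have "\<dots> = 4 * real N * e n powr \<kappa>"
      using e(1)[of n] by (simp add: powr_add)
    finally show ?thesis .
  qed
  then show "(\<lambda>n. measure M {\<omega> \<in> space M.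
      \<bar>W (\<lambda>y. rect_incr (\<lambda>z. zkernel z y) s (e n) x) \<omega>\<bar> \<le> real N * (2 * e n powr (1 + \<kappa>))}) \<longlonglongrightarrow> 0"
    by (intro tendsto_sandwich[OF _ _ tendsto_const bound_lim]) (auto intro!: always_eventually)
qed

theorem lemma1p2:
  fixes M :: "'a measure" and W :: "(real \<times> real \<Rightarrow> real) \<Rightarrow> 'a \<Rightarrow> real"
    and Z :: "real \<times> real \<Rightarrow> 'a \<Rightarrow> real"
    and x :: "real \<times> real" and \<kappa> s :: real
  assumes "white_noise M W"
    and "\<And>z. AE \<omega> in M. Z z \<omega> = W (zkernel z) \<omega> / 2"
    and "\<And>\<omega>. \<omega> \<in> space M \<Longrightarrow> continuous_on UNIV (\<lambda>z. Z z \<omega>)"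
    and "\<kappa> > 0"
    and "s = 1 \<or> s = -1"
  shows "AE \<omega> in M.
           Limsup (at (0::real))
             (\<lambda>e. ereal (\<bar>rect_incr (\<lambda>z. Z z \<omega>) s e x\<bar> / \<bar>e\<bar> powr (1 + \<kappa>))) = \<infinity>"
proof -
  \<comment> \<open>Only countably many increments enter.\<close>
  note wn = assms(1) and Z = assms(2)
  define c where "c = (if fst x = snd x then 1 else \<bar>fst x - snd x\<bar> / 2)"
  have "0 < c"
    by (simp add: c_def)
  then obtain e where e_pos: "\<And>n. 0 < e n" and "e \<longlonglongrightarrow> 0" and e_small: "\<And>n. e n < c"
    by (rule positive_null_sequence_below) auto
  moreover have e_nonzero: "e n \<noteq> 0" for n
    using e_pos[of n] by simp
  ultimately have e_at_0: "filterlim e (at 0) sequentially"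
    by (intro filterlim_atI always_eventually) auto
  have e_off_diagonal: "fst x \<noteq> snd x \<Longrightarrow> 2 * e n < \<bar>fst x - snd x\<bar>" for n
    using e_small[of n] by (simp add: c_def)
  define X where "X n = W (\<lambda>y. rect_incr (\<lambda>z. zkernel z y) s (e n) x)" for n
  have "AE \<omega> in M. \<forall>n. rect_incr (\<lambda>z. Z z \<omega>) s (e n) x = X n \<omega> / 2"
    unfolding X_def AE_all_countable using wn sq_int_zkernel Z by (intro allI AE_rect_incr_half_white_noise)
  moreover have "AE \<omega> in M. \<forall>N::nat. \<exists>\<^sub>F n in sequentially. real N * (2 * e n powr (1 + \<kappa>)) < \<bar>X n \<omega>\<bar>"
    unfolding X_def using wn e_pos e_off_diagonal \<open>e \<longlonglongrightarrow> 0\<close> assms(5,4)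
    by (rule white_noise_rect_incr_zkernel_frequently_large)
  ultimately show ?thesis
  proof eventually_elim
    case (elim \<omega>)
    have "\<exists>\<^sub>F n in sequentially.
        ereal (real N) \<le> ereal (\<bar>rect_incr (\<lambda>z. Z z \<omega>) s (e n) x\<bar> / \<bar>e n\<bar> powr (1 + \<kappa>))" for N :: nat
      using elim(2)[rule_format, of N]
      by (rule frequently_elim1) (simp add: elim(1) e_pos e_nonzero less_imp_le pos_le_divide_eq)
    then show ?case
      by (rule Limsup_eq_PInfty_of_frequently_ge[OF e_at_0])
  qed
qed

end
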